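(* Let $M\in\mathbb{R}^{n\times n}$ be such that the function $x\mapsto x^TMx$ belongs to the class $\mathcal{Q}$, and let $Z=\sum_{P\in\mathcal{P}} P^TMP$, where $\mathcal{P}$ is the set of all $n\times n$ permutation matrices. Then there exists $\alpha>0$ such that $x^TZx=\alpha V(x)$ for all $x\in\mathbb{R}^n$, where $V(x)=\sum_{i=1}^n (x_i-\bar{x})^2$ with $\bar{x}=\frac1n\sum_{i=1}^n x_i$.
   Context: Fix a positive integer $n$. Let $\mathbf{e}\in\mathbb{R}^n$ be the all-ones vector. A square matrix is stochastic if it is entrywise nonnegative and each row sums to $1$. Let $\mathcal{A}\subset\mathbb{R}^{n\times n}$ be the set of stochastic matrices $A=(a_{ij})$ such that: (i) $a_{ii}>0$ for all $i$; (ii) all positive entries in any given row of $A$ are equal; (iii) $a_{ij}>0$ if and only if $a_{ji}>0$; (iv) the graph on $\{1,\dots,n\}$ with edge set $\{(i,j): a_{ij}>0\}$ is connected. The class $\mathcal{Q}$ consists of all functions $Q(x)=x^TMx$ on $\mathbb{R}^n$ where (a) $M$ is nonzero, symmetric and nonnegative definite; (b) $x^TA^TMAx\le x^TMx$ for all $A\in\mathcal{A}$ and $x\in\mathbb{R}^n$; (c) $Q(\mathbf{e})=0$ (equivalently $M\mathbf{e}=0$). For a permutation $\sigma$ of $\{1,\dots,n\}$, the permutation matrix $P_\sigma$ is defined by $(P_\sigma x)_i=x_{\sigma(i)}$; $\mathcal{P}$ is the set of all such matrices. *)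

theory Defs
  imports "HOL-Analysis.Analysis" "HOL-Combinatorics.Permutations"
begin

text \<open>Vectors in R^n are real^'n, n x n matrices are real^'n^'n (rows indexed first).\<close>

definition stochastic :: "real^'n^'n \<Rightarrow> bool" where
  "stochastic A \<longleftrightarrow> (\<forall>i j. A$i$j \<ge> 0) \<and> (\<forall>i. (\<Sum>j\<in>UNIV. A$i$j) = 1)"

text \<open>The class \<A>: conditions (i)-(iv). Connectivity: every pair of indices is joined
  by a path in the graph with edges {(i,j). a_ij > 0}.\<close>
definition class_A :: "real^'n^'n \<Rightarrow> bool" where
  "class_A A \<longleftrightarrow> stochastic A
     \<and> (\<forall>i. A$i$i > 0)
     \<and> (\<forall>i j k. A$i$j > 0 \<longrightarrow> A$i$k > 0 \<longrightarrow> A$i$j = A$i$k)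
     \<and> (\<forall>i j. A$i$j > 0 \<longleftrightarrow> A$j$i > 0)
     \<and> (\<forall>i j. (i, j) \<in> {(k, l). A$k$l > 0}\<^sup>*)"

definition quad :: "real^'n^'n \<Rightarrow> real^'n \<Rightarrow> real" where
  "quad M x = x \<bullet> (M *v x)"

definition class_Q :: "real^'n^'n \<Rightarrow> bool" where
  "class_Q M \<longleftrightarrow> M \<noteq> 0 \<and> transpose M = M \<and> (\<forall>x. quad M x \<ge> 0)
     \<and> (\<forall>A x. class_A A \<longrightarrow> quad (transpose A ** M ** A) x \<le> quad M x)
     \<and> quad M (\<chi> i. 1) = 0"

definition perm_mat :: "('n \<Rightarrow> 'n) \<Rightarrow> real^'n^'n" where
  "perm_mat \<sigma> = (\<chi> i j. if \<sigma> i = j then 1 else 0)"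

definition perm_mats :: "(real^'n^'n) set" where
  "perm_mats = {perm_mat \<sigma> | \<sigma>. \<sigma> permutes (UNIV :: 'n set)}"

definition Vfun :: "real^'n \<Rightarrow> real" where
  "Vfun x = (let m = (\<Sum>i\<in>UNIV. x$i) / real CARD('n) in \<Sum>i\<in>UNIV. (x$i - m)^2)"

end

theory Submission
  imports Defs
begin

text \<open>Averaging Q over all permutations gives \<Sum>_{i,j} M_ij c_ij(x) with
  c_ij(x) = \<Sum>_\<sigma> x_{\<sigma> i} x_{\<sigma> j}. The symmetric group acts transitively on indices and
  on ordered pairs of distinct indices, so c_ij takes one value d on the diagonal and one value
  e off it. As the entries of M sum to Q(1) = 0, the average is (d - e) tr M. Counting gives
  d - e = n!/(n-1) V(x), and tr M > 0 since M is nonzero, symmetric and positive semidefinite.\<close>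

lemma quad_eq_sum: "quad M x = (\<Sum>i\<in>UNIV. \<Sum>j\<in>UNIV. M$i$j * x$i * x$j)"
  unfolding quad_def inner_vec_def matrix_vector_mult_def
  by (simp add: sum_distrib_left mult_ac)

lemma quad_sum_left: "quad (\<Sum>P\<in>S. f P) x = (\<Sum>P\<in>S. quad (f P) x)"
proof -
  have "quad (\<Sum>P\<in>S. f P) x = (\<Sum>i\<in>UNIV. \<Sum>j\<in>UNIV. \<Sum>P\<in>S. f P$i$j * x$i * x$j)"
    unfolding quad_eq_sum by (simp only: sum_component sum_distrib_right)
  also have "\<dots> = (\<Sum>i\<in>UNIV. \<Sum>P\<in>S. \<Sum>j\<in>UNIV. f P$i$j * x$i * x$j)"
    by (rule sum.cong[OF refl], rule sum.swap)
  also have "\<dots> = (\<Sum>P\<in>S. quad (f P) x)"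
    unfolding quad_eq_sum by (rule sum.swap)
  finally show ?thesis .
qed

lemma quad_transpose_mult: "quad (transpose P ** M ** P) x = quad M (P *v x)"
proof -
  have "quad (transpose P ** M ** P) x = x \<bullet> (transpose P *v (M *v (P *v x)))"
    unfolding quad_def by (simp add: matrix_vector_mul_assoc matrix_mul_assoc)
  also have "\<dots> = (P *v x) \<bullet> (M *v (P *v x))"
    unfolding transpose_matrix_vector
    by (subst inner_commute, subst dot_lmul_matrix, rule inner_commute)
  finally show ?thesis unfolding quad_def .
qed

lemma quad_axis: "quad M (axis i 1) = M$i$i"
  unfolding quad_eq_sum axis_def
  by (simp add: if_distrib[of "\<lambda>v. _ * v"] cong: if_cong)

lemma quad_axis_plus_axis:
  assumes "i \<noteq> j"
  shows "quad M (axis i 1 + axis j t) = M$i$i + t * M$i$j + t * M$j$i + t * t * M$j$j"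
  using assms unfolding quad_eq_sum axis_def
  by (simp add: algebra_simps sum.distrib if_distrib[of "\<lambda>v. _ * v"]
      sum_distrib_left[symmetric] sum.If_cases cong: if_cong)

lemma psd_diag_nonneg: "(\<And>x. quad M x \<ge> 0) \<Longrightarrow> M$i$i \<ge> 0"
  by (metis quad_axis)

lemma psd_zero_diag_imp_zero:
  assumes sym: "transpose M = M" and psd: "\<And>x. quad M x \<ge> 0" and diag: "\<And>i. M$i$i = 0"
  shows "M = 0"
proof -
  have offdiag: "M$i$j = 0" if "i \<noteq> j" for i j
  proof -
    have Mji: "M$j$i = M$i$j"
      using sym by (metis transpose_def vec_lambda_beta)
    have "0 \<le> quad M (axis i 1 + axis j (- M$i$j))"
      by (rule psd)
    also have "\<dots> = - 2 * (M$i$j * M$i$j)"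
      using that by (simp add: quad_axis_plus_axis diag Mji)
    finally show ?thesis
      by (auto simp: mult_le_0_iff)
  qed
  have "M$i$j = 0" for i j
    using diag offdiag by (cases "i = j") auto
  then show ?thesis
    by (simp add: vec_eq_iff)
qed

lemma psd_diag_sum_pos:
  assumes "M \<noteq> 0" "transpose M = M" "\<And>x. quad M x \<ge> 0"
  shows "(\<Sum>i\<in>UNIV. M$i$i) > 0"
proof (rule ccontr)
  assume "\<not> ?thesis"
  have nonneg: "\<And>i. M$i$i \<ge> 0"
    using psd_diag_nonneg[OF assms(3)] .
  then have "(\<Sum>i\<in>UNIV. M$i$i) \<ge> 0"
    by (simp add: sum_nonneg)
  with \<open>\<not> ?thesis\<close> have "(\<Sum>i\<in>UNIV. M$i$i) = 0"
    by simp
  then have "\<And>i. M$i$i = 0"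
    using nonneg by (simp add: sum_nonneg_eq_0_iff)
  then show False
    using psd_zero_diag_imp_zero assms by blast
qed

lemma class_Q_diag_sum_pos: "class_Q M \<Longrightarrow> (\<Sum>i\<in>UNIV. M$i$i) > 0"
  unfolding class_Q_def by (blast intro: psd_diag_sum_pos)

lemma class_Q_entry_sum: "class_Q M \<Longrightarrow> (\<Sum>i\<in>UNIV. \<Sum>j\<in>UNIV. M$i$j) = 0"
  unfolding class_Q_def quad_eq_sum by simp

lemma class_Q_card_ge_2:
  fixes M :: "real^'n^'n"
  assumes "class_Q M"
  shows "CARD('n) \<ge> 2"
proof (rule ccontr)
  assume "\<not> ?thesis"
  then have "\<forall>a \<in> UNIV. \<forall>b \<in> UNIV. a = (b :: 'n)"
    using card_le_Suc0_iff_eq[of "UNIV :: 'n set"] by simp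
  then have UNIV_eq: "UNIV = {undefined :: 'n}"
    by auto
  have "(\<Sum>i\<in>UNIV. \<Sum>j\<in>UNIV. M$i$j) = (\<Sum>i\<in>UNIV. M$i$i)"
    unfolding UNIV_eq by simp
  then show False
    using class_Q_entry_sum[OF assms] class_Q_diag_sum_pos[OF assms] by simp
qed

lemma perm_mat_vec: "perm_mat \<sigma> *v x = (\<chi> i. x $ \<sigma> i)"
  unfolding perm_mat_def matrix_vector_mult_def
  by (simp add: vec_eq_iff if_distrib[of "\<lambda>v. v * _"] cong: if_cong)

lemma inj_perm_mat: "inj (perm_mat :: ('n::finite \<Rightarrow> 'n) \<Rightarrow> real^'n^'n)"
proof (rule injI)
  fix s t :: "'n \<Rightarrow> 'n"
  assume eq: "perm_mat s = perm_mat t"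
  have "t i = s i" for i
  proof -
    have "perm_mat t $ i $ s i = perm_mat s $ i $ s i"
      by (simp add: eq)
    then show ?thesis
      by (simp add: perm_mat_def split: if_splits)
  qed
  then show "s = t" by auto
qed

definition perm_moment :: "real^'n \<Rightarrow> 'n \<Rightarrow> 'n \<Rightarrow> real" where
  "perm_moment x i j = (\<Sum>\<sigma>\<in>{\<sigma>. \<sigma> permutes UNIV}. x $ \<sigma> i * x $ \<sigma> j)"

lemma quad_sum_perm_mats:
  "quad (\<Sum>P\<in>perm_mats. transpose P ** M ** P) x
     = (\<Sum>i\<in>UNIV. \<Sum>j\<in>UNIV. M$i$j * perm_moment x i j)"
proof -
  have perm_mats_eq: "perm_mats = perm_mat ` {\<sigma>. \<sigma> permutes UNIV}"
    unfolding perm_mats_def by blast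
  have "quad (\<Sum>P\<in>perm_mats. transpose P ** M ** P) x
      = (\<Sum>P\<in>perm_mat ` {\<sigma>. \<sigma> permutes UNIV}. quad M (P *v x))"
    unfolding perm_mats_eq by (simp add: quad_sum_left quad_transpose_mult)
  also have "\<dots> = (\<Sum>\<sigma>\<in>{\<sigma>. \<sigma> permutes UNIV}. quad M (perm_mat \<sigma> *v x))"
    by (rule sum.reindex[OF inj_on_subset[OF inj_perm_mat], unfolded comp_def]) simp
  also have "\<dots> = (\<Sum>\<sigma>\<in>{\<sigma>. \<sigma> permutes UNIV}. \<Sum>i\<in>UNIV. \<Sum>j\<in>UNIV. M$i$j * (x $ \<sigma> i * x $ \<sigma> j))"
    unfolding quad_eq_sum perm_mat_vec vec_lambda_beta mult.assoc ..
  also have "\<dots> = (\<Sum>i\<in>UNIV. \<Sum>j\<in>UNIV. M$i$j * perm_moment x i j)"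
    unfolding perm_moment_def sum_distrib_left
    by (subst sum.swap, rule sum.cong[OF refl], subst sum.swap, rule refl)
  finally show ?thesis .
qed

lemma perm_moment_permute:
  "\<tau> permutes UNIV \<Longrightarrow> perm_moment x (\<tau> i) (\<tau> j) = perm_moment x i j"
  unfolding perm_moment_def
  by (rule sum_permutations_compose_right[of \<tau> UNIV "\<lambda>p. x $ p i * x $ p j",
        unfolded comp_def, symmetric])

lemma permutes_pair_exists:
  fixes a b i j :: 'n
  assumes "a \<noteq> b" "i \<noteq> j"
  obtains \<tau> where "\<tau> permutes UNIV" "\<tau> a = i" "\<tau> b = j"
proof -
  define b' where "b' = Transposition.transpose a i b"
  have "b' \<noteq> i"
    unfolding b'_def using assms by (auto simp add: transpose_eq_iff)
  let ?\<tau> = "Transposition.transpose b' j \<circ> Transposition.transpose a i"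
  have "?\<tau> permutes UNIV"
    by (intro permutes_compose permutes_swap_id) auto
  moreover have "?\<tau> a = i"
    using \<open>b' \<noteq> i\<close> assms by simp
  moreover have "?\<tau> b = j"
    by (simp add: b'_def[symmetric])
  ultimately show ?thesis using that by blast
qed

lemma perm_moment_diag: "perm_moment x i i = perm_moment x a a"
  using perm_moment_permute[of "Transposition.transpose a i" x a a] by (simp add: permutes_swap_id)

lemma perm_moment_offdiag:
  assumes "a \<noteq> b" "i \<noteq> j"
  shows "perm_moment x i j = perm_moment x a b"
  using permutes_pair_exists[OF assms] perm_moment_permute by metis

lemma card_permutes_UNIV: "card {\<sigma>. \<sigma> permutes (UNIV :: 'n::finite set)} = fact CARD('n)"
  by (rule card_permutations) auto

lemma sum_perm_moment_diag:
  fixes x :: "real^'n"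
  shows "(\<Sum>i\<in>UNIV. perm_moment x i i) = fact CARD('n) * (\<Sum>i\<in>UNIV. x$i * x$i)"
proof -
  have "(\<Sum>i\<in>UNIV. perm_moment x i i)
      = (\<Sum>\<sigma>\<in>{\<sigma>. \<sigma> permutes UNIV}. \<Sum>i\<in>UNIV. x $ \<sigma> i * x $ \<sigma> i)"
    unfolding perm_moment_def by (rule sum.swap)
  also have "\<dots> = (\<Sum>\<sigma>\<in>{\<sigma>. \<sigma> permutes (UNIV :: 'n set)}. \<Sum>i\<in>UNIV. x$i * x$i)"
    by (rule sum.cong[OF refl]) (simp add: sum.permute[of _ UNIV "\<lambda>k. x$k * x$k"] comp_def)
  finally show ?thesis
    by (simp add: card_permutes_UNIV)
qed

lemma sum_perm_moment:
  fixes x :: "real^'n"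
  shows "(\<Sum>i\<in>UNIV. \<Sum>j\<in>UNIV. perm_moment x i j) = fact CARD('n) * (\<Sum>i\<in>UNIV. x$i)^2"
proof -
  have "(\<Sum>i\<in>UNIV. \<Sum>j\<in>UNIV. perm_moment x i j)
      = (\<Sum>\<sigma>\<in>{\<sigma>. \<sigma> permutes UNIV}. (\<Sum>i\<in>UNIV. x $ \<sigma> i) * (\<Sum>j\<in>UNIV. x $ \<sigma> j))"
    unfolding perm_moment_def sum_product
    by (subst sum.swap, rule sum.cong[OF refl], rule sum.swap)
  also have "\<dots> = (\<Sum>\<sigma>\<in>{\<sigma>. \<sigma> permutes (UNIV :: 'n set)}. (\<Sum>i\<in>UNIV. x$i)^2)"
    by (rule sum.cong[OF refl]) (simp add: sum.permute[of _ UNIV "\<lambda>k. x$k"] comp_def power2_eq_square)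
  finally show ?thesis
    by (simp add: card_permutes_UNIV)
qed

lemma Vfun_eq:
  fixes x :: "real^'n"
  shows "Vfun x = (\<Sum>i\<in>UNIV. x$i * x$i) - (\<Sum>i\<in>UNIV. x$i)^2 / CARD('n)"
proof -
  define m where "m = (\<Sum>i\<in>UNIV. x$i) / CARD('n)"
  have "Vfun x = (\<Sum>i\<in>UNIV. (x$i - m)^2)"
    unfolding Vfun_def m_def Let_def ..
  also have "\<dots> = (\<Sum>i\<in>UNIV. x$i * x$i) - 2 * m * (\<Sum>i\<in>UNIV. x$i) + CARD('n) * m * m"
    by (simp add: power2_eq_square algebra_simps sum.distrib sum_subtractf sum_distrib_left)
  finally show ?thesis
    unfolding m_def by (simp add: field_simps power2_eq_square)
qed

lemma perm_moment_diag_minus_offdiag: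
  fixes x :: "real^'n"
  assumes "a \<noteq> b"
  shows "perm_moment x a a - perm_moment x a b = fact CARD('n) / (real CARD('n) - 1) * Vfun x"
proof -
  define n where "n = real CARD('n)"
  define d where "d = perm_moment x a a"
  define e where "e = perm_moment x a b"
  have "card {a, b} \<le> CARD('n)"
    by (rule card_mono) auto
  with assms have "n \<ge> 2"
    unfolding n_def by simp
  have "(\<Sum>j\<in>UNIV. perm_moment x i j) = n * e + (d - e)" for i
  proof -
    have "perm_moment x i j = e + (if i = j then d - e else 0)" for j
      using perm_moment_diag[of x i a] perm_moment_offdiag[OF assms, of i j x]
      unfolding d_def e_def by auto
    then show ?thesis
      unfolding n_def by (simp add: sum.distrib)
  qed
  then have "n * (n * e + (d - e)) = fact CARD('n) * (\<Sum>i\<in>UNIV. x$i)^2"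
    using sum_perm_moment[of x] unfolding n_def by simp
  moreover have "(\<Sum>i\<in>UNIV. perm_moment x i i) = (\<Sum>i\<in>(UNIV :: 'n set). d)"
    unfolding d_def by (intro sum.cong refl perm_moment_diag)
  then have "n * d = fact CARD('n) * (\<Sum>i\<in>UNIV. x$i * x$i)"
    using sum_perm_moment_diag[of x] by (simp add: n_def)
  ultimately have "n * ((d - e) * (n - 1)) = n * (fact CARD('n) * Vfun x)"
    unfolding Vfun_eq n_def[symmetric] using \<open>n \<ge> 2\<close> by (simp add: field_simps)
  then have "(d - e) * (n - 1) = fact CARD('n) * Vfun x"
    using \<open>n \<ge> 2\<close> by simp
  then have "d - e = fact CARD('n) / (n - 1) * Vfun x"
    using \<open>n \<ge> 2\<close> by (simp add: field_simps)
  then show ?thesis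
    by (simp add: d_def e_def n_def)
qed

lemma sum_entries_mult_diag_offdiag:
  fixes d e :: real
  assumes "\<And>i. c i i = d" "\<And>i j. i \<noteq> j \<Longrightarrow> c i j = e"
  shows "(\<Sum>i\<in>UNIV. \<Sum>j\<in>UNIV. M$i$j * c i j)
           = e * (\<Sum>i\<in>UNIV. \<Sum>j\<in>UNIV. M$i$j) + (d - e) * (\<Sum>i\<in>UNIV. M$i$i)"
proof -
  have "M$i$j * c i j = e * M$i$j + (if i = j then (d - e) * M$i$i else 0)" for i j
    using assms by (cases "i = j") (simp_all add: algebra_simps)
  then show ?thesis
    by (simp add: sum.distrib sum_distrib_left)
qed

theorem lemma2:
  fixes M :: "real^'n^'n"
  assumes "class_Q M"
  shows "\<exists>\<alpha>>0. \<forall>x. quad (\<Sum>P\<in>perm_mats. transpose P ** M ** P) x = \<alpha> * Vfun x"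
proof -
  have "\<not> CARD('n) \<le> Suc 0"
    using class_Q_card_ge_2[OF assms] by simp
  then obtain a b :: 'n where "a \<noteq> b"
    by (auto simp: card_le_Suc0_iff_eq)
  define \<alpha> where "\<alpha> = fact CARD('n) / (real CARD('n) - 1) * (\<Sum>i\<in>UNIV. M$i$i)"
  have "\<alpha> > 0"
    unfolding \<alpha>_def using class_Q_card_ge_2[OF assms] class_Q_diag_sum_pos[OF assms] by simp
  moreover have "quad (\<Sum>P\<in>perm_mats. transpose P ** M ** P) x = \<alpha> * Vfun x" for x
  proof -
    have "quad (\<Sum>P\<in>perm_mats. transpose P ** M ** P) x
        = (perm_moment x a a - perm_moment x a b) * (\<Sum>i\<in>UNIV. M$i$i)"
      unfolding quad_sum_perm_mats
      using sum_entries_mult_diag_offdiag[of "perm_moment x" "perm_moment x a a" "perm_moment x a b",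
          OF perm_moment_diag perm_moment_offdiag[OF \<open>a \<noteq> b\<close>]]
        class_Q_entry_sum[OF assms] by simp
    then show ?thesis
      unfolding \<alpha>_def perm_moment_diag_minus_offdiag[OF \<open>a \<noteq> b\<close>] by simp
  qed
  ultimately show ?thesis by blast
qed

end
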